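(* For $n\ge 4$, the dom-stability of the cycle $C_n$ is $St_{dom}(C_n)=3$ if $n\equiv 0\pmod 4$, $St_{dom}(C_n)=2$ if $n\equiv 3\pmod 4$, and $St_{dom}(C_n)=1$ otherwise.
   Context: A dominated coloring of a graph is a proper coloring in which every color class is dominated by at least one vertex, i.e. for each color class $C$ there is a vertex adjacent to every vertex of $C$; $\chi_{dom}(G)$ is the minimum number of colors in a dominated coloring. The dom-stability $St_{dom}(G)$ is the minimum number of vertices of $G$ whose removal changes the dominated chromatic number of $G$. *)

theory Defs
  imports Main
begin

text \<open>A graph is given by a finite vertex set V and a symmetric irreflexive
adjacency relation E (only its restriction to V matters).  Removing a set S of
vertices yields the induced subgraph on V - S with the same relation E.\<close>

text \<open>Convention for isolated vertices: a vertex also dominates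
itself (closed neighbourhood), so a singleton class consisting of an isolated
vertex counts as dominated.  For graphs without isolated vertices this coincides
with the open-neighbourhood definition (properness forces a class containing w
to be the singleton {w}, which is dominated by any neighbour of w).\<close>

definition dominated_coloring :: "'a set \<Rightarrow> ('a \<Rightarrow> 'a \<Rightarrow> bool) \<Rightarrow> ('a \<Rightarrow> nat) \<Rightarrow> bool" where
  "dominated_coloring V E c \<longleftrightarrow>
     (\<forall>u\<in>V. \<forall>v\<in>V. E u v \<longrightarrow> c u \<noteq> c v) \<and>
     (\<forall>i \<in> c ` V. \<exists>w\<in>V. \<forall>u\<in>V. c u = i \<longrightarrow> (u = w \<or> E w u))"

definition chi_dom :: "'a set \<Rightarrow> ('a \<Rightarrow> 'a \<Rightarrow> bool) \<Rightarrow> nat" where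
  "chi_dom V E = (LEAST k. \<exists>c. dominated_coloring V E c \<and> card (c ` V) = k)"

definition St_dom :: "'a set \<Rightarrow> ('a \<Rightarrow> 'a \<Rightarrow> bool) \<Rightarrow> nat" where
  "St_dom V E = (LEAST k. \<exists>S. S \<subseteq> V \<and> card S = k \<and> chi_dom (V - S) E \<noteq> chi_dom V E)"

definition cycle_adj :: "nat \<Rightarrow> nat \<Rightarrow> nat \<Rightarrow> bool" where
  "cycle_adj n u v \<longleftrightarrow> u = (v + 1) mod n \<or> v = (u + 1) mod n"

end

theory Submission
  imports Defs "HOL-Number_Theory.Cong"
begin

text \<open>In a graph of maximum degree two every colour class of a dominated colouring is a single
vertex or two vertices with a common neighbour, so \<open>\<chi>\<^sub>d\<^sub>o\<^sub>m \<ge> |V|/2\<close>, and the inequality is strict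
as soon as some set of odd size is closed under having a common neighbour.  For the subgraph of
\<open>C\<^sub>n\<close> induced by \<open>{0, \<dots>, m-1}\<close> (the path \<open>P\<^sub>m\<close> for \<open>m < n\<close>, the cycle itself for \<open>m = n\<close>) this
gives \<open>\<chi>\<^sub>d\<^sub>o\<^sub>m = 2\<lfloor>m/4\<rfloor> + min (m mod 4) 2\<close>, the matching colouring giving \<open>4k, 4k+2\<close> one
colour and \<open>4k+1, 4k+3\<close> another.  Up to rotation, deleting one vertex of \<open>C\<^sub>n\<close> leaves \<open>P\<^sub>n\<^sub>-\<^sub>1\<close>,
deleting two leaves disjoint paths with \<open>y\<close> and \<open>n-2-y\<close> vertices, on which \<open>\<chi>\<^sub>d\<^sub>o\<^sub>m\<close> is additive,
and deleting three consecutive vertices leaves \<open>P\<^sub>n\<^sub>-\<^sub>3\<close>.  Comparing these values with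
\<open>\<chi>\<^sub>d\<^sub>o\<^sub>m(C\<^sub>n)\<close> for each residue of \<open>n\<close> modulo 4 gives the stability.\<close>

section \<open>Dominated colourings\<close>

lemma dominated_coloring_inj_on:
  assumes "inj_on c V" and "\<forall>v\<in>V. \<not> E v v"
  shows "dominated_coloring V E c"
  using assms unfolding dominated_coloring_def inj_on_def by blast

lemma chi_dom_le:
  assumes "dominated_coloring V E c"
  shows "chi_dom V E \<le> card (c ` V)"
  unfolding chi_dom_def using assms by (blast intro: Least_le)

lemma chi_dom_attained:
  assumes "finite V" and "\<forall>v\<in>V. \<not> E v v"
  obtains c where "dominated_coloring V E c" "card (c ` V) = chi_dom V E"
proof -
  obtain c\<^sub>0 :: "_ \<Rightarrow> nat" where "inj_on c\<^sub>0 V"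
    using finite_imp_inj_to_nat_seg[OF assms(1)] by blast
  then have "\<exists>c. dominated_coloring V E c" using dominated_coloring_inj_on assms(2) by blast
  then show thesis
    using that LeastI_ex[of "\<lambda>k. \<exists>c. dominated_coloring V E c \<and> card (c ` V) = k"]
    unfolding chi_dom_def by blast
qed

lemma le_chi_domI:
  assumes "finite V" and "\<forall>v\<in>V. \<not> E v v"
    and "\<And>c. dominated_coloring V E c \<Longrightarrow> k \<le> card (c ` V)"
  shows "k \<le> chi_dom V E"
  using chi_dom_attained[of V E] assms by metis

lemma dominated_coloring_transfer:
  assumes h: "bij_betw h V W"
    and adj: "\<And>u v. u \<in> V \<Longrightarrow> v \<in> V \<Longrightarrow> E' (h u) (h v) = E u v"
    and c: "dominated_coloring V E c"
  shows "\<exists>c'. dominated_coloring W E' c' \<and> card (c' ` W) = card (c ` V)"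
proof (intro exI conjI)
  let ?g = "inv_into V h"
  have g: "?g u \<in> V" "h (?g u) = u" if "u \<in> W" for u
    using that h by (auto intro: bij_betw_apply[OF bij_betw_inv_into] bij_betw_inv_into_right)
  have image: "(c \<circ> ?g) ` W = c ` V"
    using bij_betw_imp_surj_on[OF bij_betw_inv_into[OF h]] by (metis image_comp)
  then show "card ((c \<circ> ?g) ` W) = card (c ` V)" by simp
  have adj': "E' u v = E (?g u) (?g v)" if "u \<in> W" "v \<in> W" for u v
    using adj[of "?g u" "?g v"] g that by simp
  from c have proper: "\<And>u v. u \<in> V \<Longrightarrow> v \<in> V \<Longrightarrow> E u v \<Longrightarrow> c u \<noteq> c v"
    and dom: "\<And>i. i \<in> c ` V \<Longrightarrow> \<exists>w\<in>V. \<forall>u\<in>V. c u = i \<longrightarrow> u = w \<or> E w u"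
    unfolding dominated_coloring_def by auto
  show "dominated_coloring W E' (c \<circ> ?g)"
    unfolding dominated_coloring_def
  proof (intro conjI ballI impI)
    fix u v assume "u \<in> W" "v \<in> W" "E' u v"
    then show "(c \<circ> ?g) u \<noteq> (c \<circ> ?g) v" using proper g adj' by simp
  next
    fix i assume "i \<in> (c \<circ> ?g) ` W"
    then obtain w where w: "w \<in> V" "\<forall>u\<in>V. c u = i \<longrightarrow> u = w \<or> E w u"
      using dom image by metis
    have "u = h w \<or> E' (h w) u" if "u \<in> W" "(c \<circ> ?g) u = i" for u
      using w g[OF that(1)] adj[OF w(1), of "?g u"] that by auto
    moreover have "h w \<in> W" using h w(1) by (rule bij_betw_apply)
    ultimately show "\<exists>w\<in>W. \<forall>u\<in>W. (c \<circ> ?g) u = i \<longrightarrow> u = w \<or> E' w u" by blast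
  qed
qed

lemma chi_dom_bij_betw:
  assumes h: "bij_betw h V W"
    and adj: "\<And>u v. u \<in> V \<Longrightarrow> v \<in> V \<Longrightarrow> E' (h u) (h v) = E u v"
  shows "chi_dom W E' = chi_dom V E"
proof -
  let ?g = "inv_into V h"
  have g: "bij_betw ?g W V" using h by (rule bij_betw_inv_into)
  have adj': "E (?g u) (?g v) = E' u v" if "u \<in> W" "v \<in> W" for u v
    using adj[of "?g u" "?g v"] that h
    by (simp add: bij_betw_apply[OF g] bij_betw_inv_into_right)
  have "(\<exists>c. dominated_coloring W E' c \<and> card (c ` W) = k) \<longleftrightarrow>
        (\<exists>c. dominated_coloring V E c \<and> card (c ` V) = k)" for k
    using dominated_coloring_transfer[of h V W E' E, OF h adj]
      dominated_coloring_transfer[of ?g W V E E', OF g adj'] by metis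
  then show ?thesis unfolding chi_dom_def by simp
qed

lemma dominated_coloring_Un:
  assumes a: "dominated_coloring A E a" and b: "dominated_coloring B E b"
    and no_edge: "\<And>u v. u \<in> A \<Longrightarrow> v \<in> B \<Longrightarrow> \<not> E u v \<and> \<not> E v u"
  shows "dominated_coloring (A \<union> B) E (\<lambda>v. if v \<in> A then 2 * a v else 2 * b v + 1)"
    (is "dominated_coloring _ _ ?c")
  unfolding dominated_coloring_def
proof (intro conjI ballI impI)
  fix u v assume "u \<in> A \<union> B" "v \<in> A \<union> B" "E u v"
  then show "?c u \<noteq> ?c v"
    using a b no_edge unfolding dominated_coloring_def by auto
next
  fix i assume "i \<in> ?c ` (A \<union> B)"
  then consider v where "v \<in> A" "i = 2 * a v" | v where "v \<in> B" "v \<notin> A" "i = 2 * b v + 1"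
    by auto
  then show "\<exists>w\<in>A \<union> B. \<forall>u\<in>A \<union> B. ?c u = i \<longrightarrow> u = w \<or> E w u"
  proof cases
    case 1
    then obtain w where w: "w \<in> A" "\<forall>u\<in>A. a u = a v \<longrightarrow> u = w \<or> E w u"
      using a unfolding dominated_coloring_def by blast
    show ?thesis using 1 w
      by (intro bexI[of _ w]) (auto simp: Suc_double_not_eq_double double_not_eq_Suc_double)
  next
    case 2
    then obtain w where w: "w \<in> B" "\<forall>u\<in>B. b u = b v \<longrightarrow> u = w \<or> E w u"
      using b unfolding dominated_coloring_def by blast
    show ?thesis using 2 w
      by (intro bexI[of _ w]) (auto simp: Suc_double_not_eq_double double_not_eq_Suc_double)
  qed
qed

lemma dominated_coloring_class_in_side:
  assumes c: "dominated_coloring (A \<union> B) E c"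
    and disj: "A \<inter> B = {}"
    and no_edge: "\<And>u v. u \<in> A \<Longrightarrow> v \<in> B \<Longrightarrow> \<not> E u v \<and> \<not> E v u"
    and u: "u \<in> A"
  obtains w where "w \<in> A" "\<forall>v\<in>A \<union> B. c v = c u \<longrightarrow> v = w \<or> E w v"
proof -
  obtain w where w: "w \<in> A \<union> B" "\<forall>v\<in>A \<union> B. c v = c u \<longrightarrow> v = w \<or> E w v"
    using c u unfolding dominated_coloring_def by blast
  have "w \<notin> B"
  proof
    assume "w \<in> B"
    then have "u \<noteq> w" "\<not> E w u" using u disj no_edge[OF u] by auto
    then show False using w u by blast
  qed
  then show thesis using that w by blast
qed

lemma dominated_coloring_restrict_side:
  assumes c: "dominated_coloring (A \<union> B) E c"
    and disj: "A \<inter> B = {}"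
    and no_edge: "\<And>u v. u \<in> A \<Longrightarrow> v \<in> B \<Longrightarrow> \<not> E u v \<and> \<not> E v u"
  shows "dominated_coloring A E c"
  unfolding dominated_coloring_def
proof (intro conjI ballI impI)
  fix u v assume "u \<in> A" "v \<in> A" "E u v"
  moreover have "\<forall>u\<in>A \<union> B. \<forall>v\<in>A \<union> B. E u v \<longrightarrow> c u \<noteq> c v"
    using c unfolding dominated_coloring_def by (rule conjunct1)
  ultimately show "c u \<noteq> c v" by blast
next
  fix i assume "i \<in> c ` A"
  then obtain u where u: "u \<in> A" "i = c u" by blast
  obtain w where "w \<in> A" "\<forall>v\<in>A \<union> B. c v = c u \<longrightarrow> v = w \<or> E w v"
    using dominated_coloring_class_in_side[OF c disj no_edge u(1)] .
  then show "\<exists>w\<in>A. \<forall>v\<in>A. c v = i \<longrightarrow> v = w \<or> E w v" using u(2) by blast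
qed

lemma dominated_coloring_image_sides_disjoint:
  assumes c: "dominated_coloring (A \<union> B) E c"
    and disj: "A \<inter> B = {}"
    and no_edge: "\<And>u v. u \<in> A \<Longrightarrow> v \<in> B \<Longrightarrow> \<not> E u v \<and> \<not> E v u"
  shows "c ` A \<inter> c ` B = {}"
proof (rule ccontr)
  assume "c ` A \<inter> c ` B \<noteq> {}"
  then obtain u v where uv: "u \<in> A" "v \<in> B" "c u = c v" by auto
  obtain w where w: "w \<in> A" "\<forall>x\<in>A \<union> B. c x = c u \<longrightarrow> x = w \<or> E w x"
    using dominated_coloring_class_in_side[OF c disj no_edge uv(1)] .
  then have "v = w \<or> E w v" using uv by auto
  moreover note w(1)
  moreover have "v \<noteq> w" using \<open>w \<in> A\<close> uv(2) disj by blast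
  ultimately show False using no_edge[OF \<open>w \<in> A\<close> uv(2)] by blast
qed

lemma chi_dom_Un:
  assumes fin: "finite A" "finite B" and disj: "A \<inter> B = {}"
    and no_edge: "\<And>u v. u \<in> A \<Longrightarrow> v \<in> B \<Longrightarrow> \<not> E u v \<and> \<not> E v u"
    and irrefl: "\<forall>v\<in>A \<union> B. \<not> E v v"
  shows "chi_dom (A \<union> B) E = chi_dom A E + chi_dom B E"
proof (rule antisym)
  obtain a where a: "dominated_coloring A E a" "card (a ` A) = chi_dom A E"
    using chi_dom_attained fin(1) irrefl by blast
  obtain b where b: "dominated_coloring B E b" "card (b ` B) = chi_dom B E"
    using chi_dom_attained fin(2) irrefl by blast
  let ?c = "\<lambda>v. if v \<in> A then 2 * a v else 2 * b v + 1"
  have "?c ` (A \<union> B) \<subseteq> (\<lambda>k. 2 * k) ` a ` A \<union> (\<lambda>k. 2 * k + 1) ` b ` B" by auto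
  then have "card (?c ` (A \<union> B)) \<le> card ((\<lambda>k. 2 * k) ` a ` A) + card ((\<lambda>k. 2 * k + 1) ` b ` B)"
    using fin by (meson card_Un_le card_mono finite_UnI finite_imageI le_trans)
  also have "\<dots> \<le> card (a ` A) + card (b ` B)"
    using fin by (intro add_mono card_image_le finite_imageI)
  finally have "card (?c ` (A \<union> B)) \<le> card (a ` A) + card (b ` B)" .
  then show "chi_dom (A \<union> B) E \<le> chi_dom A E + chi_dom B E"
    using chi_dom_le[OF dominated_coloring_Un[OF a(1) b(1) no_edge]] a(2) b(2) by linarith
next
  have no_edge': "\<And>u v. u \<in> B \<Longrightarrow> v \<in> A \<Longrightarrow> \<not> E u v \<and> \<not> E v u"
    using no_edge by blast
  obtain c where c: "dominated_coloring (A \<union> B) E c" "card (c ` (A \<union> B)) = chi_dom (A \<union> B) E"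
    using chi_dom_attained[of "A \<union> B" E] fin irrefl by blast
  have "card (c ` (A \<union> B)) = card (c ` A) + card (c ` B)"
    unfolding image_Un using fin dominated_coloring_image_sides_disjoint[OF c(1) disj no_edge]
    by (simp add: card_Un_disjoint)
  moreover have "chi_dom A E \<le> card (c ` A)"
    using chi_dom_le dominated_coloring_restrict_side[OF c(1) disj no_edge] by blast
  moreover have "chi_dom B E \<le> card (c ` B)"
    using chi_dom_le dominated_coloring_restrict_side[of B A E c] c(1) disj no_edge'
    by (simp add: Un_commute Int_commute)
  ultimately show "chi_dom A E + chi_dom B E \<le> chi_dom (A \<union> B) E" using c(2) by linarith
qed

section \<open>Lower bounds from the maximum degree\<close>

lemma dominated_coloring_class_nbhd:
  assumes c: "dominated_coloring V E c"
    and ab: "a \<in> V" "b \<in> V" "a \<noteq> b" "c a = c b"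
  obtains w where "w \<in> V" "\<And>u. u \<in> V \<Longrightarrow> c u = c a \<Longrightarrow> E w u"
proof -
  from c have proper: "\<And>u v. u \<in> V \<Longrightarrow> v \<in> V \<Longrightarrow> E u v \<Longrightarrow> c u \<noteq> c v"
    unfolding dominated_coloring_def by blast
  obtain w where w: "w \<in> V" "\<forall>u\<in>V. c u = c a \<longrightarrow> u = w \<or> E w u"
    using c ab(1) unfolding dominated_coloring_def by blast
  have "c w \<noteq> c a"
  proof
    assume cw: "c w = c a"
    have "a \<noteq> w \<or> b \<noteq> w" using ab(3) by blast
    then show False
    proof
      assume "a \<noteq> w"
      then have "E w a" using w ab(1) by blast
      then show False using proper[OF w(1) ab(1)] cw by simp
    next
      assume "b \<noteq> w"
      then have "E w b" using w ab(2,4) by auto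
      then show False using proper[OF w(1) ab(2)] cw ab(4) by simp
    qed
  qed
  with w have "\<And>u. u \<in> V \<Longrightarrow> c u = c a \<Longrightarrow> E w u" by auto
  with w(1) show thesis by (rule that)
qed

lemma dominated_coloring_class_card_le:
  assumes c: "dominated_coloring V E c" and fin: "finite V"
    and deg: "\<And>w. w \<in> V \<Longrightarrow> card {v\<in>V. E w v} \<le> d" and d: "1 \<le> d"
  shows "card {v\<in>V. c v = i} \<le> d"
proof (cases "\<exists>a\<in>V. \<exists>b\<in>V. a \<noteq> b \<and> c a = i \<and> c b = i")
  case True
  then obtain a b where ab: "a \<in> V" "b \<in> V" "a \<noteq> b" "c a = i" "c b = i" by blast
  then obtain w where "w \<in> V" "\<And>u. u \<in> V \<Longrightarrow> c u = i \<Longrightarrow> E w u"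
    using dominated_coloring_class_nbhd[OF c ab(1-3)] by metis
  then have "card {v\<in>V. c v = i} \<le> card {v\<in>V. E w v}"
    using fin by (intro card_mono) auto
  then show ?thesis using deg \<open>w \<in> V\<close> by (meson le_trans)
next
  case False
  then have "card {v\<in>V. c v = i} \<le> Suc 0"
    using fin by (subst card_le_Suc0_iff_eq) auto
  then show ?thesis using d by linarith
qed

lemma dominated_coloring_card_le:
  assumes c: "dominated_coloring V E c" and fin: "finite V"
    and deg: "\<And>w. w \<in> V \<Longrightarrow> card {v\<in>V. E w v} \<le> d" and d: "1 \<le> d"
    and X: "X \<subseteq> V"
  shows "card X \<le> d * card (c ` X)"
proof -
  have finX: "finite X" using fin X by (rule finite_subset[rotated])
  have "X = (\<Union>i\<in>c ` X. {v\<in>X. c v = i})" by auto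
  then have "card X \<le> (\<Sum>i\<in>c ` X. card {v\<in>X. c v = i})"
    by (metis card_UN_le finX finite_imageI)
  also have "\<dots> \<le> (\<Sum>i\<in>c ` X. d)"
  proof (rule sum_mono)
    fix i
    have "card {v\<in>X. c v = i} \<le> card {v\<in>V. c v = i}"
      using fin X by (intro card_mono) auto
    then show "card {v\<in>X. c v = i} \<le> d"
      using dominated_coloring_class_card_le[OF c fin deg d] by (meson le_trans)
  qed
  finally show ?thesis by (simp add: mult.commute)
qed

lemma dominated_coloring_odd_closed_set:
  assumes c: "dominated_coloring V E c" and fin: "finite V"
    and deg: "\<And>w. w \<in> V \<Longrightarrow> card {v\<in>V. E w v} \<le> 2"
    and A: "A \<subseteq> V" "odd (card A)"
    and closed: "\<And>w a b. w \<in> V \<Longrightarrow> a \<in> A \<Longrightarrow> b \<in> V - A \<Longrightarrow> E w a \<Longrightarrow> E w b \<Longrightarrow> False"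
  shows "card V < 2 * card (c ` V)"
proof -
  have disj: "c ` A \<inter> c ` (V - A) = {}"
  proof (rule ccontr)
    assume "c ` A \<inter> c ` (V - A) \<noteq> {}"
    then obtain a b where ab: "a \<in> A" "b \<in> V - A" "c a = c b" by auto
    then have "a \<in> V" "b \<in> V" "a \<noteq> b" using A(1) by auto
    then obtain w where "w \<in> V" "\<And>u. u \<in> V \<Longrightarrow> c u = c a \<Longrightarrow> E w u"
      using dominated_coloring_class_nbhd[OF c _ _ _ ab(3)] by metis
    then have "E w a" "E w b" using \<open>a \<in> V\<close> \<open>b \<in> V\<close> ab(3) by auto
    then show False using closed[OF \<open>w \<in> V\<close> ab(1,2)] by blast
  qed
  have finA: "finite A" using fin A(1) by (rule finite_subset[rotated])
  have "card A \<le> 2 * card (c ` A)"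
    by (rule dominated_coloring_card_le[OF c fin deg _ A(1)]) auto
  moreover have "card (V - A) \<le> 2 * card (c ` (V - A))"
    by (rule dominated_coloring_card_le[OF c fin deg]) auto
  moreover have "card A \<noteq> 2 * card (c ` A)" using A(2) by auto
  moreover have "card (c ` V) = card (c ` A) + card (c ` (V - A))"
  proof -
    have "c ` V = c ` A \<union> c ` (V - A)" using A(1) by blast
    then show ?thesis using fin finA disj by (simp add: card_Un_disjoint)
  qed
  moreover have "card V = card A + card (V - A)"
    using card_Diff_subset[OF finA A(1)] card_mono[OF fin A(1)] by simp
  ultimately show ?thesis by linarith
qed

section \<open>The cycle and its rotations\<close>

lemma cycle_adj_cases:
  assumes "u < n" "v < n" "cycle_adj n u v"
  shows "u = v + 1 \<or> v = u + 1 \<or> u = 0 \<and> v = n - 1 \<or> u = n - 1 \<and> v = 0"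
  using assms unfolding cycle_adj_def by (auto simp: mod_Suc split: if_splits)

lemma cycle_adj_SucI: "u + 1 < n \<Longrightarrow> cycle_adj n u (u + 1) \<and> cycle_adj n (u + 1) u"
  unfolding cycle_adj_def by simp

lemma cycle_adj_irrefl: "2 \<le> n \<Longrightarrow> u < n \<Longrightarrow> \<not> cycle_adj n u u"
  using cycle_adj_cases[of u n u] by auto

lemma cycle_adj_path_iff:
  assumes "u < n - 1" "v < n - 1"
  shows "cycle_adj n u v \<longleftrightarrow> u = v + 1 \<or> v = u + 1"
  using assms cycle_adj_cases[of u n v] cycle_adj_SucI[of u n] cycle_adj_SucI[of v n] by auto

lemma card_cycle_nbhd_le_2:
  assumes "V \<subseteq> {0..<n}" "w < n"
  shows "card {v\<in>V. cycle_adj n w v} \<le> 2"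
proof -
  have pred: "v = (w + n - 1) mod n" if "v < n" "w = (v + 1) mod n" for v
  proof (cases "v + 1 < n")
    case False
    then have "v + 1 = n" using that(1) by simp
    then have "v = n - 1" "w = 0" using that(2) by auto
    then show ?thesis using that(1) by simp
  qed (use that in auto)
  have "{v\<in>V. cycle_adj n w v} \<subseteq> {(w + 1) mod n, (w + n - 1) mod n}"
    using assms pred unfolding cycle_adj_def by auto
  then have "card {v\<in>V. cycle_adj n w v} \<le> card {(w + 1) mod n, (w + n - 1) mod n}"
    by (rule card_mono[rotated]) simp
  also have "\<dots> \<le> 2" by (simp add: card_insert_if)
  finally show ?thesis .
qed

lemma odd_add_if_cycle_adj:
  assumes "u < n" "v < n" "cycle_adj n u v" "even n \<or> max u v < n - 1"
  shows "odd (u + v)"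
  using cycle_adj_cases[OF assms(1-3)] assms by auto

definition cycle_rotate :: "nat \<Rightarrow> nat \<Rightarrow> nat \<Rightarrow> nat" where
  "cycle_rotate n t v = (v + t) mod n"

lemma cycle_rotate_eq_iff: "cycle_rotate n t u = cycle_rotate n t v \<longleftrightarrow> u mod n = v mod n"
  unfolding cycle_rotate_def using cong_add_rcancel_nat[of u t v n] by (simp add: cong_def)

lemma cycle_adj_cycle_rotate:
  assumes "u < n" "v < n"
  shows "cycle_adj n (cycle_rotate n t u) (cycle_rotate n t v) = cycle_adj n u v"
proof -
  have Suc: "(cycle_rotate n t x + 1) mod n = cycle_rotate n t (x + 1)" for x
    unfolding cycle_rotate_def by (simp add: mod_simps ac_simps)
  show ?thesis
    unfolding cycle_adj_def Suc cycle_rotate_eq_iff using assms by simp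
qed

lemma inj_on_cycle_rotate: "inj_on (cycle_rotate n t) {0..<n}"
  by (rule inj_onI) (simp add: cycle_rotate_eq_iff)

lemma cycle_rotate_image:
  assumes "0 < n"
  shows "cycle_rotate n t ` {0..<n} = {0..<n}"
  using assms by (intro endo_inj_surj inj_on_cycle_rotate) (auto simp: cycle_rotate_def)

lemma chi_dom_cycle_rotate:
  assumes "V \<subseteq> {0..<n}"
  shows "chi_dom (cycle_rotate n t ` V) (cycle_adj n) = chi_dom V (cycle_adj n)"
proof (rule chi_dom_bij_betw)
  show "bij_betw (cycle_rotate n t) V (cycle_rotate n t ` V)"
    using inj_on_subset[OF inj_on_cycle_rotate assms] by (rule inj_on_imp_bij_betw)
  show "cycle_adj n (cycle_rotate n t u) (cycle_rotate n t v) = cycle_adj n u v"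
    if "u \<in> V" "v \<in> V" for u v
    using that assms by (intro cycle_adj_cycle_rotate) auto
qed

lemma chi_dom_cycle_Diff_rotate:
  assumes "0 < n" "S \<subseteq> {0..<n}"
  shows "chi_dom ({0..<n} - cycle_rotate n t ` S) (cycle_adj n) = chi_dom ({0..<n} - S) (cycle_adj n)"
proof -
  have "cycle_rotate n t ` ({0..<n} - S) = {0..<n} - cycle_rotate n t ` S"
    using inj_on_image_set_diff[OF inj_on_cycle_rotate _ assms(2)] cycle_rotate_image[OF assms(1)]
    by auto
  then show ?thesis using chi_dom_cycle_rotate[of "{0..<n} - S" n t] by auto
qed

lemma chi_dom_cycle_shift:
  assumes "a + m \<le> n"
  shows "chi_dom {a..<a + m} (cycle_adj n) = chi_dom {0..<m} (cycle_adj n)"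
proof -
  have "cycle_rotate n a ` {0..<m} = (\<lambda>v. v + a) ` {0..<m}"
    using assms by (intro image_cong) (auto simp: cycle_rotate_def)
  then have "cycle_rotate n a ` {0..<m} = {a..<a + m}" by (simp add: add.commute)
  then show ?thesis using chi_dom_cycle_rotate[of "{0..<m}" n a] assms by auto
qed

section \<open>Initial segments of the cycle\<close>

definition path_chi_dom :: "nat \<Rightarrow> nat" where
  "path_chi_dom m = 2 * (m div 4) + min (m mod 4) 2"

lemma path_chi_dom_4k: "r < 4 \<Longrightarrow> path_chi_dom (4 * k + r) = 2 * k + min r 2"
  unfolding path_chi_dom_def by simp

lemma nat_div_mod_4E:
  fixes m :: nat
  obtains k r where "m = 4 * k + r" "r < 4"
  using div_mult_mod_eq[of m 4] by (metis mod_less_divisor mult.commute zero_less_numeral)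

lemma path_chi_dom_add:
  assumes "y + z + 2 = 4 * q"
  shows "path_chi_dom y + path_chi_dom z = 2 * q"
proof -
  obtain i r j s where y: "y = 4 * i + r" "r < 4" and z: "z = 4 * j + s" "s < 4"
    by (metis nat_div_mod_4E)
  have "4 * i + r + (4 * j + s) + 2 = 4 * q" using assms unfolding y z .
  then have "r + s = 2 \<and> i + j + 1 = q \<or> r = 3 \<and> s = 3 \<and> i + j + 2 = q"
    using y(2) z(2) by presburger
  then show ?thesis unfolding y z using y(2) z(2) by (auto simp: path_chi_dom_4k)
qed

lemma path_chi_dom_le:
  assumes "m + (if m mod 4 = 2 then 1 else 0) \<le> 2 * k"
  shows "path_chi_dom m \<le> k"
proof -
  obtain i r where m: "m = 4 * i + r" "r < 4" by (rule nat_div_mod_4E)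
  then have P: "path_chi_dom m = 2 * i + min r 2" and "m mod 4 = r" by (simp_all add: path_chi_dom_4k)
  then have H: "4 * i + r + (if r = 2 then 1 else 0) \<le> 2 * k" using assms m(1) by simp
  consider "r = 0" | "r = 1" | "r = 2" | "r = 3" using m(2) by linarith
  then show ?thesis using H unfolding P by cases simp_all
qed

definition path_coloring :: "nat \<Rightarrow> nat" where
  "path_coloring v = 2 * (v div 4) + v mod 2"

lemma path_coloring_div_mod: "path_coloring v div 2 = v div 4" "path_coloring v mod 2 = v mod 2"
  by (simp_all add: path_coloring_def)

lemma path_coloring_eqD:
  assumes "u < v" "path_coloring u = path_coloring v"
  shows "v = u + 2"
proof -
  obtain k r where u: "u = 4 * k + r" "r < 4" by (rule nat_div_mod_4E)
  obtain l s where v: "v = 4 * l + s" "s < 4" by (rule nat_div_mod_4E)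
  have mod2: "(4 * x + y) mod 2 = y mod 2" for x y :: nat
    by (simp add: mod_add_left_eq[symmetric])
  have "u div 4 = v div 4" "u mod 2 = v mod 2"
    using path_coloring_div_mod[of u] path_coloring_div_mod[of v] assms(2) by simp_all
  then have "l = k" "r mod 2 = s mod 2" using u v by (simp_all add: mod2)
  moreover have "r < s" using assms(1) u v \<open>l = k\<close> by simp
  moreover have "r = 0 \<or> r = 1 \<or> r = 2 \<or> r = 3" "s = 0 \<or> s = 1 \<or> s = 2 \<or> s = 3"
    using u(2) v(2) by auto
  ultimately show ?thesis using u v by auto
qed

lemma even_path_coloring_iff: "even (path_coloring v) \<longleftrightarrow> even v"
  by (simp add: path_coloring_def even_iff_mod_2_eq_zero)

lemma path_coloring_ne_0:
  assumes "3 \<le> v"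
  shows "path_coloring v \<noteq> 0"
proof
  assume "path_coloring v = 0"
  then have "v < 4" "even v" unfolding path_coloring_def by auto
  then show False using assms by (auto simp: less_Suc_eq)
qed

lemma path_coloring_less:
  assumes "v < m"
  shows "path_coloring v < path_chi_dom m"
proof -
  obtain i r j s where v: "v = 4 * i + r" "r < 4" and m: "m = 4 * j + s" "s < 4"
    by (metis nat_div_mod_4E)
  have "4 * i + r < 4 * j + s" using assms unfolding v m .
  then have "i < j \<or> i = j \<and> r < s" using v(2) m(2) by presburger
  moreover have "path_coloring v = 2 * i + r mod 2"
    unfolding v path_coloring_def using v(2) by (simp add: mod_add_left_eq[symmetric])
  moreover have "path_chi_dom m = 2 * j + min s 2" unfolding m using m(2) by (rule path_chi_dom_4k)
  moreover have "r = 0 \<or> r = 1 \<or> r = 2 \<or> r = 3" "s = 0 \<or> s = 1 \<or> s = 2 \<or> s = 3"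
    using v(2) m(2) by auto
  ultimately show ?thesis by auto
qed

lemma dominated_coloring_prefixI:
  assumes "m \<le> n"
    and proper: "\<And>u v. u < m \<Longrightarrow> v < m \<Longrightarrow> cycle_adj n u v \<Longrightarrow> c u \<noteq> c v"
    and pairs: "\<And>u v. u < v \<Longrightarrow> v < m \<Longrightarrow> c u = c v \<Longrightarrow> v = u + 2"
  shows "dominated_coloring {0..<m} (cycle_adj n) c"
  unfolding dominated_coloring_def
proof (intro conjI ballI impI)
  fix u v assume "u \<in> {0..<m}" "v \<in> {0..<m}" "cycle_adj n u v"
  then show "c u \<noteq> c v" using proper by simp
next
  fix i assume "i \<in> c ` {0..<m}"
  then have ex: "\<exists>v. v < m \<and> c v = i" by auto
  define a where "a = (LEAST v. v < m \<and> c v = i)"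
  have a: "a < m" "c a = i" using LeastI_ex[OF ex] unfolding a_def by auto
  have members: "u = a \<or> u = a + 2" if "u < m" "c u = i" for u
  proof -
    have "a \<le> u" unfolding a_def using that by (simp add: Least_le)
    then show ?thesis using pairs[of a u] that a by force
  qed
  show "\<exists>w\<in>{0..<m}. \<forall>u\<in>{0..<m}. c u = i \<longrightarrow> u = w \<or> cycle_adj n w u"
  proof (cases "a + 2 < m \<and> c (a + 2) = i")
    case True
    then have "cycle_adj n (a + 1) a" "cycle_adj n (a + 1) (a + 2)"
      using assms(1) cycle_adj_SucI[of a n] cycle_adj_SucI[of "a + 1" n] by auto
    then have "cycle_adj n (a + 1) u" if "u < m" "c u = i" for u using members[OF that] by auto
    then show ?thesis using True by (intro bexI[of _ "a + 1"]) auto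
  next
    case False
    then have "u = a" if "u < m" "c u = i" for u using members[OF that] that by blast
    then show ?thesis using a(1) by (intro bexI[of _ a]) auto
  qed
qed

lemma dominated_coloring_path_coloring:
  assumes "4 \<le> n" "m \<le> n"
  shows "dominated_coloring {0..<m} (cycle_adj n) path_coloring"
proof (rule dominated_coloring_prefixI[OF assms(2)])
  fix u v assume uv: "u < m" "v < m" "cycle_adj n u v"
  then have "u < n" "v < n" using assms(2) by auto
  then have "u = v + 1 \<or> v = u + 1 \<or> u = 0 \<and> v = n - 1 \<or> u = n - 1 \<and> v = 0"
    using cycle_adj_cases uv(3) by blast
  moreover have "path_coloring (x + 1) \<noteq> path_coloring x" for x
    using even_path_coloring_iff[of x] even_path_coloring_iff[of "x + 1"] by auto
  moreover have "path_coloring (n - 1) \<noteq> path_coloring 0"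
    using path_coloring_ne_0[of "n - 1"] assms(1) by (simp add: path_coloring_def)
  ultimately show "path_coloring u \<noteq> path_coloring v" by metis
qed (rule path_coloring_eqD)

lemma chi_dom_prefix_le:
  assumes "4 \<le> n" "m \<le> n"
  shows "chi_dom {0..<m} (cycle_adj n) \<le> path_chi_dom m"
proof -
  have "card (path_coloring ` {0..<m}) \<le> card {0..<path_chi_dom m}"
    by (rule card_mono) (auto simp: path_coloring_less)
  then show ?thesis
    using chi_dom_le[OF dominated_coloring_path_coloring[OF assms]] by simp
qed

lemma card_even_below: "card {v\<in>{0..<2 * j}. even v} = (j :: nat)"
proof -
  have "{v\<in>{0..<2 * j}. even v} = (\<lambda>k. 2 * k) ` {0..<j}" by (auto elim!: evenE)
  then show ?thesis by (simp add: card_image inj_on_def)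
qed

lemma chi_dom_prefix_ge:
  assumes "2 \<le> n" "m \<le> n"
  shows "path_chi_dom m \<le> chi_dom {0..<m} (cycle_adj n)"
proof (rule le_chi_domI)
  show "finite {0..<m}" by simp
  show "\<forall>v\<in>{0..<m}. \<not> cycle_adj n v v" using assms cycle_adj_irrefl by auto
  fix c assume c: "dominated_coloring {0..<m} (cycle_adj n) c"
  have deg: "\<And>w. w \<in> {0..<m} \<Longrightarrow> card {v\<in>{0..<m}. cycle_adj n w v} \<le> 2"
    using assms by (intro card_cycle_nbhd_le_2) auto
  have "card {0..<m} \<le> 2 * card (c ` {0..<m})"
    by (rule dominated_coloring_card_le[OF c _ deg]) auto
  moreover have "card {0..<m} < 2 * card (c ` {0..<m})" if "m mod 4 = 2"
    \<comment> \<open>the even vertices: an odd set, since two vertices with a common neighbour have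
      the same parity (for \<open>m = n\<close> because \<open>n\<close> is then even)\<close>
  proof (rule dominated_coloring_odd_closed_set[OF c _ deg])
    define j where "j = 2 * (m div 4) + 1"
    have m: "m = 2 * j" unfolding j_def using \<open>m mod 4 = 2\<close> by presburger
    then show "odd (card {v\<in>{0..<m}. even v})" using card_even_below[of j] by (simp add: j_def)
    have parity: "even n \<or> max u v < n - 1" if "u < m" "v < m" for u v
      using that assms(2) m by (cases "m = n") auto
    fix w a b
    assume w: "w \<in> {0..<m}" and a: "a \<in> {v\<in>{0..<m}. even v}"
      and b: "b \<in> {0..<m} - {v\<in>{0..<m}. even v}"
      and adj: "cycle_adj n w a" "cycle_adj n w b"
    have "odd (w + a)"
      using odd_add_if_cycle_adj[OF _ _ adj(1) parity] w a assms(2) by auto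
    moreover have "odd (w + b)"
      using odd_add_if_cycle_adj[OF _ _ adj(2) parity] w b assms(2) by auto
    ultimately show False using a b by auto
  qed auto
  ultimately show "path_chi_dom m \<le> card (c ` {0..<m})" by (intro path_chi_dom_le) auto
qed

lemma chi_dom_prefix:
  assumes "4 \<le> n" "m \<le> n"
  shows "chi_dom {0..<m} (cycle_adj n) = path_chi_dom m"
  using chi_dom_prefix_le[OF assms] chi_dom_prefix_ge[of n m] assms by simp

section \<open>Deleting vertices from the cycle\<close>

lemma chi_dom_path_Diff_singleton:
  assumes "4 \<le> n" "y < n - 1"
  shows "chi_dom ({0..<n - 1} - {y}) (cycle_adj n) = path_chi_dom y + path_chi_dom (n - 2 - y)"
proof -
  let ?B = "{y + 1..<(y + 1) + (n - 2 - y)}"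
  have split: "{0..<n - 1} - {y} = {0..<y} \<union> ?B" using assms by auto
  have no_edge: "\<not> cycle_adj n u v \<and> \<not> cycle_adj n v u" if "u \<in> {0..<y}" "v \<in> ?B" for u v
  proof -
    have "u < n - 1" "v < n - 1" "u + 1 < v" using that assms by auto
    then show ?thesis using cycle_adj_path_iff[of u n v] cycle_adj_path_iff[of v n u] by auto
  qed
  have "chi_dom ({0..<y} \<union> ?B) (cycle_adj n) = chi_dom {0..<y} (cycle_adj n) + chi_dom ?B (cycle_adj n)"
    by (rule chi_dom_Un) (use no_edge assms cycle_adj_irrefl in auto)
  also have "chi_dom ?B (cycle_adj n) = chi_dom {0..<n - 2 - y} (cycle_adj n)"
    by (rule chi_dom_cycle_shift) (use assms in auto)
  finally show ?thesis using split chi_dom_prefix[of n y] chi_dom_prefix[of n "n - 2 - y"] assms by simp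
qed

lemma chi_dom_cycle_Diff_singleton:
  assumes "4 \<le> n" "x < n"
  shows "chi_dom ({0..<n} - {x}) (cycle_adj n) = path_chi_dom (n - 1)"
proof -
  have "cycle_rotate n (n - 1 - x) ` {x} = {n - 1}" using assms by (simp add: cycle_rotate_def)
  moreover have "{0..<n} - {n - 1} = {0..<n - 1}" using assms by auto
  ultimately show ?thesis
    using chi_dom_cycle_Diff_rotate[of n "{x}" "n - 1 - x"] chi_dom_prefix[of n "n - 1"] assms by auto
qed

lemma chi_dom_cycle_Diff_pair:
  assumes "4 \<le> n" "a < n" "b < n" "a \<noteq> b"
  obtains y where "y < n - 1"
    "chi_dom ({0..<n} - {a, b}) (cycle_adj n) = path_chi_dom y + path_chi_dom (n - 2 - y)"
proof -
  define y where "y = cycle_rotate n (n - 1 - b) a"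
  have "cycle_rotate n (n - 1 - b) b = n - 1" using assms by (simp add: cycle_rotate_def)
  moreover have "y \<noteq> cycle_rotate n (n - 1 - b) b"
    using assms unfolding y_def cycle_rotate_eq_iff by simp
  moreover have "y < n" using assms unfolding y_def cycle_rotate_def by simp
  ultimately have y: "y < n - 1" "cycle_rotate n (n - 1 - b) ` {a, b} = {y, n - 1}"
    unfolding y_def by auto
  have "{0..<n} - {y, n - 1} = {0..<n - 1} - {y}" by auto
  then have "chi_dom ({0..<n} - {a, b}) (cycle_adj n) = chi_dom ({0..<n - 1} - {y}) (cycle_adj n)"
    using chi_dom_cycle_Diff_rotate[of n "{a, b}" "n - 1 - b"] y(2) assms by auto
  then show thesis using that y(1) chi_dom_path_Diff_singleton[OF assms(1) y(1)] by simp
qed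

lemma St_dom_eqI:
  assumes "S \<subseteq> V" "card S = k" "chi_dom (V - S) E \<noteq> chi_dom V E"
    and "\<And>S. S \<subseteq> V \<Longrightarrow> card S < k \<Longrightarrow> chi_dom (V - S) E = chi_dom V E"
  shows "St_dom V E = k"
  unfolding St_dom_def
proof (rule Least_equality)
  show "\<exists>S. S \<subseteq> V \<and> card S = k \<and> chi_dom (V - S) E \<noteq> chi_dom V E" using assms(1-3) by blast
next
  fix l assume "\<exists>S. S \<subseteq> V \<and> card S = l \<and> chi_dom (V - S) E \<noteq> chi_dom V E"
  then show "k \<le> l" using assms(4) by (meson not_le)
qed

lemma card_le_2_cases:
  assumes "finite S" "card S \<le> 2"
  obtains "S = {}" | x where "S = {x}" | a b where "a \<noteq> b" "S = {a, b}"
proof -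
  have "card S = 0 \<or> card S = 1 \<or> card S = 2" using assms(2) by auto
  then show thesis using that assms(1) by (auto simp: card_1_singleton_iff card_2_iff)
qed

lemma St_dom_cycle_eq_1:
  assumes "4 \<le> n" "path_chi_dom (n - 1) \<noteq> path_chi_dom n"
  shows "St_dom {0..<n} (cycle_adj n) = 1"
proof (rule St_dom_eqI)
  show "{n - 1} \<subseteq> {0..<n}" "card {n - 1} = 1" using assms by auto
  show "chi_dom ({0..<n} - {n - 1}) (cycle_adj n) \<noteq> chi_dom {0..<n} (cycle_adj n)"
    using assms chi_dom_cycle_Diff_singleton[of n "n - 1"] chi_dom_prefix[of n n] by simp
qed (simp add: finite_subset)

lemma St_dom_cycle_eq_2:
  assumes "4 \<le> n" "path_chi_dom (n - 1) = path_chi_dom n" "path_chi_dom (n - 2) \<noteq> path_chi_dom n"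
  shows "St_dom {0..<n} (cycle_adj n) = 2"
proof (rule St_dom_eqI)
  show "{n - 2, n - 1} \<subseteq> {0..<n}" "card {n - 2, n - 1} = 2" using assms by auto
  have "{0..<n} - {n - 2, n - 1} = {0..<n - 2}" by auto
  then show "chi_dom ({0..<n} - {n - 2, n - 1}) (cycle_adj n) \<noteq> chi_dom {0..<n} (cycle_adj n)"
    using assms chi_dom_prefix[of n] by simp
next
  fix S assume S: "S \<subseteq> {0..<n}" "card S < 2"
  then consider "S = {}" | x where "S = {x}" "x < n"
    by (cases rule: card_le_2_cases[OF finite_subset[OF S(1)]]) auto
  then show "chi_dom ({0..<n} - S) (cycle_adj n) = chi_dom {0..<n} (cycle_adj n)"
    using assms chi_dom_cycle_Diff_singleton chi_dom_prefix[of n n] by cases auto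
qed

lemma St_dom_cycle_eq_3:
  assumes "4 \<le> n" "path_chi_dom (n - 1) = path_chi_dom n"
    and "\<And>y. y < n - 1 \<Longrightarrow> path_chi_dom y + path_chi_dom (n - 2 - y) = path_chi_dom n"
    and "path_chi_dom (n - 3) \<noteq> path_chi_dom n"
  shows "St_dom {0..<n} (cycle_adj n) = 3"
proof (rule St_dom_eqI)
  have "n - 3 \<noteq> n - 2" "n - 3 \<noteq> n - 1" "n - 2 \<noteq> n - 1" using assms(1) by auto
  then show "{n - 3, n - 2, n - 1} \<subseteq> {0..<n}" "card {n - 3, n - 2, n - 1} = 3" using assms by auto
  have "{0..<n} - {n - 3, n - 2, n - 1} = {0..<n - 3}" by auto
  then show "chi_dom ({0..<n} - {n - 3, n - 2, n - 1}) (cycle_adj n) \<noteq> chi_dom {0..<n} (cycle_adj n)"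
    using assms chi_dom_prefix[of n] by simp
next
  fix S assume S: "S \<subseteq> {0..<n}" "card S < 3"
  then consider "S = {}" | x where "S = {x}" "x < n" | a b where "a \<noteq> b" "S = {a, b}" "a < n" "b < n"
    by (cases rule: card_le_2_cases[OF finite_subset[OF S(1)]]) auto
  then show "chi_dom ({0..<n} - S) (cycle_adj n) = chi_dom {0..<n} (cycle_adj n)"
  proof cases
    case (3 a b)
    obtain y where "y < n - 1"
      "chi_dom ({0..<n} - {a, b}) (cycle_adj n) = path_chi_dom y + path_chi_dom (n - 2 - y)"
      using chi_dom_cycle_Diff_pair[OF assms(1) 3(3,4,1)] .
    then show ?thesis using 3(2) assms(1,3) chi_dom_prefix[of n n] by simp
  qed (use assms chi_dom_cycle_Diff_singleton chi_dom_prefix[of n n] in auto)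
qed

theorem mainTheorem9:
  fixes n :: nat
  assumes "n \<ge> 4"
  shows "St_dom {0..<n} (cycle_adj n) =
           (if n mod 4 = 0 then 3 else if n mod 4 = 3 then 2 else 1)"
proof -
  obtain q r where n: "n = 4 * q + r" "r < 4" by (rule nat_div_mod_4E)
  with assms have "1 \<le> q" by linarith
  have "n mod 4 = r" using n by simp
  consider "r = 0" | "r = 1" | "r = 2" | "r = 3" using n(2) by linarith
  then show ?thesis
  proof cases
    case 1
    then have "n = 4 * q" "n - 1 = 4 * (q - 1) + 3" "n - 3 = 4 * (q - 1) + 1"
      using n \<open>1 \<le> q\<close> by auto
    moreover have "path_chi_dom y + path_chi_dom (n - 2 - y) = 2 * q" if "y < n - 1" for y
      using that \<open>n = 4 * q\<close> by (intro path_chi_dom_add) auto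
    ultimately show ?thesis
      using St_dom_cycle_eq_3[OF assms] \<open>1 \<le> q\<close> path_chi_dom_4k[of 0 q]
        path_chi_dom_4k[of 3 "q - 1"] path_chi_dom_4k[of 1 "q - 1"] by simp
  next
    case 2
    then show ?thesis
      using St_dom_cycle_eq_1[OF assms] n \<open>n mod 4 = r\<close>
        path_chi_dom_4k[of 1 q] path_chi_dom_4k[of 0 q] by simp
  next
    case 3
    then show ?thesis
      using St_dom_cycle_eq_1[OF assms] n \<open>n mod 4 = r\<close>
        path_chi_dom_4k[of 2 q] path_chi_dom_4k[of 1 q] by simp
  next
    case 4
    then show ?thesis
      using St_dom_cycle_eq_2[OF assms] n \<open>n mod 4 = r\<close>
        path_chi_dom_4k[of 3 q] path_chi_dom_4k[of 2 q] path_chi_dom_4k[of 1 q] by simp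
  qed
qed

end
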